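(* For two candidates, using Weighted Majority Rule 5 (defined in the context), the selected candidate $W\in\{P,Q\}$ always satisfies $SC(W)\le\sqrt2\min\{SC(P),SC(Q)\}$, i.e., the distortion is at most $\sqrt2$; by the lower bound for exact strengths this is the best possible bound.
   Context: Voters $N$ and candidates $P,Q$ are points of an arbitrary metric space $(X,d)$; $SC(Y)=\sum_{i\in N}d(i,Y)$. $A$ is the set of voters preferring $P$ ($d(i,P)\le d(i,Q)$), with exact strengths $\alpha_i=d(i,Q)/d(i,P)$; $B$ the set preferring $Q$, with strengths $\beta_j=d(j,P)/d(j,Q)$. Define $w(x)=\frac{\sqrt2x-1}{x+1}$ if $x>\sqrt2$ and $w(x)=x-1$ if $1\le x\le\sqrt2$. Weighted Majority Rule 5: each $i\in A$ gets weight $w(\alpha_i)$, each $j\in B$ gets weight $w(\beta_j)$; select $P$ if $\sum_{i\in A}w(\alpha_i)\ge\sum_{j\in B}w(\beta_j)$, otherwise $Q$. *)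

theory Defs
  imports "HOL-Analysis.Analysis" "HOL-Library.Extended_Real"
begin

definition SC :: "'v set \<Rightarrow> ('v \<Rightarrow> 'a::metric_space) \<Rightarrow> 'a \<Rightarrow> real" where
  "SC N loc Y = (\<Sum>i\<in>N. dist (loc i) Y)"

definition prefA :: "'v set \<Rightarrow> ('v \<Rightarrow> 'a::metric_space) \<Rightarrow> 'a \<Rightarrow> 'a \<Rightarrow> 'v set" where
  "prefA N loc P Q = {i\<in>N. dist (loc i) P \<le> dist (loc i) Q}"

definition prefB :: "'v set \<Rightarrow> ('v \<Rightarrow> 'a::metric_space) \<Rightarrow> 'a \<Rightarrow> 'a \<Rightarrow> 'v set" where
  "prefB N loc P Q = {j\<in>N. \<not> dist (loc j) P \<le> dist (loc j) Q}"

text \<open>Exact strength d(i,other)/d(i,preferred), valued in [1,\<infinity>]; it is \<infinity> when the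
voter sits exactly at its preferred candidate (division by zero).\<close>
definition strength :: "real \<Rightarrow> real \<Rightarrow> ereal" where
  "strength dpref dother = (if dpref = 0 then \<infinity> else ereal (dother / dpref))"

text \<open>The weight function w; at \<infinity> it takes its limit value sqrt 2.\<close>
definition w5 :: "ereal \<Rightarrow> real" where
  "w5 x = (if x = \<infinity> then sqrt 2
           else if real_of_ereal x > sqrt 2
                then (sqrt 2 * real_of_ereal x - 1) / (real_of_ereal x + 1)
                else real_of_ereal x - 1)"

definition alpha :: "('v \<Rightarrow> 'a::metric_space) \<Rightarrow> 'a \<Rightarrow> 'a \<Rightarrow> 'v \<Rightarrow> ereal" where
  "alpha loc P Q i = strength (dist (loc i) P) (dist (loc i) Q)"

definition beta :: "('v \<Rightarrow> 'a::metric_space) \<Rightarrow> 'a \<Rightarrow> 'a \<Rightarrow> 'v \<Rightarrow> ereal" where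
  "beta loc P Q j = strength (dist (loc j) Q) (dist (loc j) P)"

definition WMR5 :: "'v set \<Rightarrow> ('v \<Rightarrow> 'a::metric_space) \<Rightarrow> 'a \<Rightarrow> 'a \<Rightarrow> 'a" where
  "WMR5 N loc P Q =
     (if (\<Sum>i\<in>prefA N loc P Q. w5 (alpha loc P Q i)) \<ge> (\<Sum>j\<in>prefB N loc P Q. w5 (beta loc P Q j))
      then P else Q)"

end

theory Submission
  imports Defs
begin

text \<open>Let \<open>D = d(P,Q)\<close> and suppose the rule elects \<open>P\<close>. By the triangle inequality every
voter \<open>i\<close> with \<open>d(i,P) = p \<le> q = d(i,Q)\<close> satisfies \<open>D \<le> p + q\<close>, and the weight \<open>w\<close> is chosen
exactly so that \<open>D \<cdot> w(q/p) \<le> \<surd>2 q - p\<close>. Symmetrically every voter \<open>j\<close> preferring \<open>Q\<close>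
satisfies \<open>p - \<surd>2 q \<le> D \<cdot> w(p/q)\<close>. Summing both families and using that the weights of
\<open>P\<close>'s supporters outweigh those of \<open>Q\<close>'s gives \<open>SC(P) \<le> \<surd>2 SC(Q)\<close>.\<close>

lemma le_sqrt2_times: "0 \<le> (x::real) \<Longrightarrow> x \<le> sqrt 2 * x"
  by (simp add: mult_le_cancel_right1)

lemma w5_strength_ratio:
  assumes "0 < p"
  shows "w5 (strength p q) =
    (if q / p > sqrt 2 then (sqrt 2 * (q / p) - 1) / (q / p + 1) else q / p - 1)"
  using assms by (simp add: strength_def w5_def)

lemma w5_strength_zero: "w5 (strength 0 q) = sqrt 2"
  by (simp add: strength_def w5_def)

text \<open>Here \<open>p\<close>, \<open>q\<close> are the distances of a voter to its preferred and to the other candidate,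
and \<open>D\<close> is the distance between the candidates.\<close>

lemma weight_bound_preferred:
  fixes p q D :: real
  assumes "0 \<le> p" "p \<le> q" "D \<le> p + q"
  shows "D * w5 (strength p q) \<le> sqrt 2 * q - p"
proof (cases "p = 0")
  case True
  with assms show ?thesis
    using le_sqrt2_times[of q] by (simp add: w5_strength_zero)
next
  case False
  with assms have "0 < p" by simp
  define a where "a = q / p"
  have q: "q = a * p" and "1 \<le> a"
    using \<open>0 < p\<close> assms(2) by (simp_all add: a_def)
  have D_le: "D \<le> p * (a + 1)"
    using assms(3) q by (simp add: algebra_simps)
  show ?thesis
  proof (cases "a > sqrt 2")
    case True
    have "0 \<le> sqrt 2 * a - 1"
      using mult_mono[of 1 "sqrt 2" 1 a] \<open>1 \<le> a\<close> by simp
    hence "D * ((sqrt 2 * a - 1) / (a + 1)) \<le> p * (a + 1) * ((sqrt 2 * a - 1) / (a + 1))"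
      using D_le \<open>1 \<le> a\<close> by (intro mult_right_mono) simp_all
    also have "\<dots> = sqrt 2 * q - p"
      using \<open>1 \<le> a\<close> q by (simp add: field_simps)
    finally show ?thesis
      using True \<open>0 < p\<close> by (simp add: w5_strength_ratio a_def)
  next
    case False
    have "D * (a - 1) \<le> p * (a + 1) * (a - 1)"
      using D_le \<open>1 \<le> a\<close> by (intro mult_right_mono) simp_all
    also have "\<dots> = p * (a * a - 1)"
      by (simp add: algebra_simps)
    also have "\<dots> \<le> p * (sqrt 2 * a - 1)"
      using False \<open>1 \<le> a\<close> \<open>0 < p\<close> by (intro mult_left_mono) (auto intro: mult_right_mono)
    also have "\<dots> = sqrt 2 * q - p"
      using q by (simp add: algebra_simps)
    finally show ?thesis
      using False \<open>0 < p\<close> by (simp add: w5_strength_ratio a_def)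
  qed
qed

lemma weight_bound_other:
  fixes p q D :: real
  assumes "0 \<le> q" "q \<le> p" "p \<le> q + D"
  shows "p - sqrt 2 * q \<le> D * w5 (strength q p)"
proof (cases "q = 0")
  case True
  with assms show ?thesis
    using le_sqrt2_times[of D] by (simp add: w5_strength_zero mult.commute[of D])
next
  case False
  with assms have "0 < q" by simp
  define b where "b = p / q"
  have p: "p = b * q" and "1 \<le> b"
    using \<open>0 < q\<close> assms(2) by (simp_all add: b_def)
  have D_ge: "q * (b - 1) \<le> D"
    using assms(3) p by (simp add: algebra_simps)
  show ?thesis
  proof (cases "b > sqrt 2")
    case True
    have "0 \<le> sqrt 2 * b - 1"
      using mult_mono[of 1 "sqrt 2" 1 b] \<open>1 \<le> b\<close> by simp
    \<comment> \<open>The gap is \<open>(\<surd>2 - 1)(b - \<surd>2 - 1)\<^sup>2\<close>, tight at \<open>b = \<surd>2 + 1\<close>.\<close>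
    have key: "(b - sqrt 2) * (b + 1) \<le> (b - 1) * (sqrt 2 * b - 1)"
    proof -
      have "(b - 1) * (sqrt 2 * b - 1) - (b - sqrt 2) * (b + 1)
            = (sqrt 2 - 1) * (b - (sqrt 2 + 1))\<^sup>2"
        by (simp add: power2_eq_square algebra_simps)
      moreover have "0 \<le> (sqrt 2 - 1) * (b - (sqrt 2 + 1))\<^sup>2"
        by simp
      ultimately show ?thesis by linarith
    qed
    have "p - sqrt 2 * q = q * ((b - sqrt 2) * (b + 1)) / (b + 1)"
      using p \<open>1 \<le> b\<close> by (simp add: field_simps)
    also have "\<dots> \<le> q * ((b - 1) * (sqrt 2 * b - 1)) / (b + 1)"
      using key \<open>0 < q\<close> \<open>1 \<le> b\<close> by (intro divide_right_mono mult_left_mono) simp_all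
    also have "\<dots> = q * (b - 1) * ((sqrt 2 * b - 1) / (b + 1))"
      by simp
    also have "\<dots> \<le> D * ((sqrt 2 * b - 1) / (b + 1))"
      using D_ge \<open>0 \<le> sqrt 2 * b - 1\<close> \<open>1 \<le> b\<close> by (intro mult_right_mono) simp_all
    finally show ?thesis
      using True \<open>0 < q\<close> by (simp add: w5_strength_ratio b_def)
  next
    case False
    have "p - sqrt 2 * q \<le> 0"
      using False p \<open>0 < q\<close> mult_right_mono[of b "sqrt 2" q] by simp
    moreover have "0 \<le> D * (b - 1)"
      using assms(2,3) \<open>1 \<le> b\<close> by simp
    ultimately show ?thesis
      using False \<open>0 < q\<close> by (simp add: w5_strength_ratio b_def)
  qed
qed

lemma sum_le_sqrt2_sum_of_weight_bounds:
  fixes f g wa wb :: "'v \<Rightarrow> real"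
  assumes "finite N" "N = A \<union> B" "A \<inter> B = {}" "0 \<le> D"
    and "\<And>i. i \<in> A \<Longrightarrow> D * wa i \<le> sqrt 2 * f i - g i"
    and "\<And>i. i \<in> B \<Longrightarrow> g i - sqrt 2 * f i \<le> D * wb i"
    and "sum wb B \<le> sum wa A"
  shows "sum g N \<le> sqrt 2 * sum f N"
proof -
  have "(\<Sum>i\<in>B. g i - sqrt 2 * f i) \<le> D * sum wb B"
    unfolding sum_distrib_left using assms(6) by (rule sum_mono)
  also have "\<dots> \<le> D * sum wa A"
    using assms(4,7) by (rule mult_left_mono[rotated])
  also have "\<dots> \<le> (\<Sum>i\<in>A. sqrt 2 * f i - g i)"
    unfolding sum_distrib_left using assms(5) by (rule sum_mono)
  finally have "sum g A + sum g B \<le> sqrt 2 * (sum f A + sum f B)"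
    by (simp add: sum_subtractf sum_distrib_left sum_distrib_right algebra_simps)
  moreover have "finite A" "finite B"
    using assms(1,2) by simp_all
  ultimately show ?thesis
    using assms(2,3) by (simp add: sum.union_disjoint)
qed

text \<open>Stated for an arbitrary split of the voters so that it applies with the roles of \<open>P\<close>
and \<open>Q\<close> exchanged; the definitions of \<open>prefA\<close>, \<open>prefB\<close> break ties asymmetrically.\<close>

lemma SC_winner_le_sqrt2_SC:
  fixes loc :: "'v \<Rightarrow> 'a::metric_space"
  assumes "finite N" "N = A \<union> B" "A \<inter> B = {}"
    and "\<And>i. i \<in> A \<Longrightarrow> dist (loc i) X \<le> dist (loc i) Y"
    and "\<And>j. j \<in> B \<Longrightarrow> dist (loc j) Y \<le> dist (loc j) X"
    and "(\<Sum>j\<in>B. w5 (strength (dist (loc j) Y) (dist (loc j) X)))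
          \<le> (\<Sum>i\<in>A. w5 (strength (dist (loc i) X) (dist (loc i) Y)))"
  shows "SC N loc X \<le> sqrt 2 * SC N loc Y"
  unfolding SC_def
proof (rule sum_le_sqrt2_sum_of_weight_bounds[OF assms(1-3) zero_le_dist[of X Y] _ _ assms(6)])
  fix i assume "i \<in> A"
  then show "dist X Y * w5 (strength (dist (loc i) X) (dist (loc i) Y))
             \<le> sqrt 2 * dist (loc i) Y - dist (loc i) X"
    using assms(4) by (intro weight_bound_preferred) (auto intro: dist_triangle3)
next
  fix j assume "j \<in> B"
  then show "dist (loc j) X - sqrt 2 * dist (loc j) Y
             \<le> dist X Y * w5 (strength (dist (loc j) Y) (dist (loc j) X))"
    using assms(5) dist_triangle[of "loc j" X Y]
    by (intro weight_bound_other) (auto simp: dist_commute)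
qed

theorem mainTheorem12:
  fixes N :: "'v set" and loc :: "'v \<Rightarrow> 'a::metric_space" and P Q :: 'a
  assumes "finite N"
  shows "SC N loc (WMR5 N loc P Q) \<le> sqrt 2 * min (SC N loc P) (SC N loc Q)"
proof -
  let ?A = "prefA N loc P Q" and ?B = "prefB N loc P Q"
  have split: "N = ?A \<union> ?B" "?A \<inter> ?B = {}" "N = ?B \<union> ?A" "?B \<inter> ?A = {}"
    by (auto simp: prefA_def prefB_def)
  have "0 \<le> SC N loc P" "0 \<le> SC N loc Q"
    by (simp_all add: SC_def sum_nonneg)
  note self_bounds = this[THEN le_sqrt2_times]
  show ?thesis
  proof (cases "(\<Sum>j\<in>?B. w5 (beta loc P Q j)) \<le> (\<Sum>i\<in>?A. w5 (alpha loc P Q i))")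
    case True
    then have "SC N loc P \<le> sqrt 2 * SC N loc Q"
      by (intro SC_winner_le_sqrt2_SC[OF assms split(1,2)])
        (auto simp: prefA_def prefB_def alpha_def beta_def)
    with True self_bounds show ?thesis by (simp add: WMR5_def min_def)
  next
    case False
    then have "SC N loc Q \<le> sqrt 2 * SC N loc P"
      by (intro SC_winner_le_sqrt2_SC[OF assms split(3,4)])
        (auto simp: prefA_def prefB_def alpha_def beta_def)
    with False self_bounds show ?thesis by (simp add: WMR5_def min_def)
  qed
qed

end
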